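(* Let $d,m\in\mathbb{Z}^+$, $n\in\mathbb{N}$, $r\in\mathbb{Z}$, and let $f$ be any function from $\mathbb{Z}$ to $\mathbb{C}$. Then $$\sum_{k\equiv r\ (\mathrm{mod}\ d)}\binom nk(-1)^kf\Big(\Big\lfloor\frac{k-r}m\Big\rfloor\Big)=\sum_{j=0}^{n}\binom nj\Bigg(\sum_{i\equiv r\ (\mathrm{mod}\ d)}\binom ji(-1)^i\Bigg)\sum_{i=0}^{m-1}\sigma_{ij},$$ where $$\sigma_{ij}=\sum_{k\equiv r+i-j\ (\mathrm{mod}\ m)}\binom{n-j}k(-1)^kf\Big(\frac{k-(r+i-j)}m\Big).$$
   Context: All sums over residue classes run over all integers in the class, with $\binom Nk=0$ unless $0\le k\le N$. *)

theory Defs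
  imports Complex_Main
begin

definition binomz :: "nat \<Rightarrow> int \<Rightarrow> int" where
  "binomz N k = (if 0 \<le> k \<and> k \<le> int N then int (N choose nat k) else 0)"

end

theory Submission
  imports Defs
begin

text \<open>
  Put a(i) = [i mod d = r mod d] (-1)^i and F(l) = f(floor((l - r) / m)). Every k lies in exactly one
  residue class r + i - j modulo m with 0 \<le> i < m, so the sum over i of the sigma(i,j) collapses
  to \<Sum>k. binom(n-j,k) (-1)^k F(k+j), while the inner sum over i is the binomial transform
  b(j) = \<Sum>i. binom(j,i) a(i). The resulting identity
  \<Sum>j. binom(n,j) b(j) \<Sum>k. binom(n-j,k) (-1)^k F(k+j) = \<Sum>l. binom(n,l) a(l) F(l)
  holds for arbitrary sequences a and F: trinomial revision binom(n,l) binom(l,j) =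
  binom(n,j) binom(n-j,l-j) turns the left side into \<Sum>l. binom(n,l) F(l) \<Sum>j. binom(l,j) (-1)^(l-j) b(j),
  and binomial inversion gives back a(l).
\<close>

lemma sum_choose_mult_alternating:
  "(\<Sum>j\<le>l. of_nat (l choose j) * of_nat (j choose i) * (-1) ^ (l - j))
     = (if i = l then 1 else (0 :: 'a :: comm_ring_1))"
proof (cases "i \<le> l")
  case False
  then have "\<forall>j\<in>{..l}. of_nat (l choose j) * of_nat (j choose i) * (-1 :: 'a) ^ (l - j) = 0"
    by (simp add: binomial_eq_0)
  with False show ?thesis by simp
next
  case True
  have "(\<Sum>j\<le>l. of_nat (l choose j) * of_nat (j choose i) * (-1) ^ (l - j))
      = (\<Sum>j=i..l. of_nat (l choose i) * (of_nat ((l - i) choose (j - i)) * (-1 :: 'a) ^ ((l - i) - (j - i))))"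
  proof (rule sum.mono_neutral_cong_right)
    fix j assume "j \<in> {i..l}"
    then have "(l choose j) * (j choose i) = (l choose i) * ((l - i) choose (j - i))"
      and "l - j = (l - i) - (j - i)"
      by (auto intro: choose_mult)
    then show "of_nat (l choose j) * of_nat (j choose i) * (-1) ^ (l - j)
        = of_nat (l choose i) * (of_nat ((l - i) choose (j - i)) * (-1 :: 'a) ^ ((l - i) - (j - i)))"
      by (metis mult.assoc of_nat_mult)
  qed (auto simp: not_le binomial_eq_0)
  also have "\<dots> = of_nat (l choose i) * (\<Sum>j=i..l. of_nat ((l - i) choose (j - i)) * (-1 :: 'a) ^ ((l - i) - (j - i)))"
    by (simp add: sum_distrib_left)
  also have "\<dots> = of_nat (l choose i) * (\<Sum>t\<le>l - i. of_nat ((l - i) choose t) * 1 ^ t * (-1) ^ ((l - i) - t))"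
    using sum.shift_bounds_cl_nat_ivl[of "\<lambda>j. of_nat ((l - i) choose (j - i)) * (-1 :: 'a) ^ ((l - i) - (j - i))" 0 i "l - i"] True
    by (simp add: atLeast0AtMost)
  also have "\<dots> = of_nat (l choose i) * (1 + -1) ^ (l - i)"
    by (simp only: binomial_ring)
  also have "\<dots> = (if i = l then 1 else 0)"
    using True by (cases "i = l") (simp_all add: zero_power)
  finally show ?thesis .
qed

lemma binomial_inversion:
  fixes a :: "nat \<Rightarrow> 'a :: comm_ring_1"
  shows "(\<Sum>j\<le>l. of_nat (l choose j) * (-1) ^ (l - j) * (\<Sum>i\<le>j. of_nat (j choose i) * a i)) = a l"
proof -
  have "(\<Sum>j\<le>l. of_nat (l choose j) * (-1) ^ (l - j) * (\<Sum>i\<le>j. of_nat (j choose i) * a i))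
      = (\<Sum>j\<le>l. \<Sum>i\<le>l. a i * (of_nat (l choose j) * of_nat (j choose i) * (-1) ^ (l - j)))"
  proof (rule sum.cong[OF refl])
    fix j assume "j \<in> {..l}"
    then have "(\<Sum>i\<le>j. of_nat (j choose i) * a i) = (\<Sum>i\<le>l. of_nat (j choose i) * a i)"
      by (intro sum.mono_neutral_left) (auto intro: ccontr simp: not_le binomial_eq_0)
    then show "of_nat (l choose j) * (-1) ^ (l - j) * (\<Sum>i\<le>j. of_nat (j choose i) * a i)
        = (\<Sum>i\<le>l. a i * (of_nat (l choose j) * of_nat (j choose i) * (-1) ^ (l - j)))"
      by (simp add: sum_distrib_left mult_ac)
  qed
  also have "\<dots> = (\<Sum>i\<le>l. a i * (\<Sum>j\<le>l. of_nat (l choose j) * of_nat (j choose i) * (-1) ^ (l - j)))"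
    by (subst sum.swap) (simp add: sum_distrib_left)
  also have "\<dots> = a l"
    by (simp add: sum_choose_mult_alternating if_distrib cong: if_cong)
  finally show ?thesis .
qed

lemma sum_trinomial_revision:
  fixes F :: "nat \<Rightarrow> 'a :: comm_ring_1"
  assumes "j \<le> n"
  shows "of_nat (n choose j) * (\<Sum>k\<le>n - j. of_nat ((n - j) choose k) * (-1) ^ k * F (k + j))
       = (\<Sum>l\<le>n. of_nat (n choose l) * of_nat (l choose j) * (-1) ^ (l - j) * F l)"
proof -
  have "(\<Sum>l\<le>n. of_nat (n choose l) * of_nat (l choose j) * (-1) ^ (l - j) * F l)
      = (\<Sum>l=j..n. of_nat (n choose j) * (of_nat ((n - j) choose (l - j)) * (-1) ^ (l - j) * F l))"
  proof (rule sum.mono_neutral_cong_right)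
    fix l assume "l \<in> {j..n}"
    then have "(n choose l) * (l choose j) = (n choose j) * ((n - j) choose (l - j))"
      by (auto intro: choose_mult)
    then show "of_nat (n choose l) * of_nat (l choose j) * (-1) ^ (l - j) * F l
        = of_nat (n choose j) * (of_nat ((n - j) choose (l - j)) * (-1 :: 'a) ^ (l - j) * F l)"
      by (metis mult.assoc of_nat_mult)
  qed (auto simp: not_le binomial_eq_0)
  also have "\<dots> = of_nat (n choose j) * (\<Sum>l=j..n. of_nat ((n - j) choose (l - j)) * (-1) ^ (l - j) * F l)"
    by (simp add: sum_distrib_left)
  also have "\<dots> = of_nat (n choose j) * (\<Sum>k\<le>n - j. of_nat ((n - j) choose k) * (-1) ^ k * F (k + j))"
    using sum.shift_bounds_cl_nat_ivl[of "\<lambda>l. of_nat ((n - j) choose (l - j)) * (-1 :: 'a) ^ (l - j) * F l" 0 j "n - j"] assms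
    by (simp add: atLeast0AtMost)
  finally show ?thesis ..
qed

lemma binomial_transform_adjoint:
  fixes a F :: "nat \<Rightarrow> 'a :: comm_ring_1"
  shows "(\<Sum>j\<le>n. of_nat (n choose j) * (\<Sum>i\<le>j. of_nat (j choose i) * a i)
            * (\<Sum>k\<le>n - j. of_nat ((n - j) choose k) * (-1) ^ k * F (k + j)))
       = (\<Sum>l\<le>n. of_nat (n choose l) * a l * F l)"
proof -
  define b where "b j = (\<Sum>i\<le>j. of_nat (j choose i) * a i)" for j
  have "(\<Sum>j\<le>n. of_nat (n choose j) * b j
            * (\<Sum>k\<le>n - j. of_nat ((n - j) choose k) * (-1) ^ k * F (k + j)))
      = (\<Sum>j\<le>n. \<Sum>l\<le>n. of_nat (n choose l) * F l * (of_nat (l choose j) * (-1) ^ (l - j) * b j))"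
  proof (rule sum.cong[OF refl])
    fix j assume "j \<in> {..n}"
    have "of_nat (n choose j) * b j * (\<Sum>k\<le>n - j. of_nat ((n - j) choose k) * (-1) ^ k * F (k + j))
        = b j * (of_nat (n choose j) * (\<Sum>k\<le>n - j. of_nat ((n - j) choose k) * (-1) ^ k * F (k + j)))"
      by (simp only: mult_ac)
    also have "\<dots> = b j * (\<Sum>l\<le>n. of_nat (n choose l) * of_nat (l choose j) * (-1) ^ (l - j) * F l)"
      using \<open>j \<in> {..n}\<close> by (simp add: sum_trinomial_revision)
    also have "\<dots> = (\<Sum>l\<le>n. of_nat (n choose l) * F l * (of_nat (l choose j) * (-1) ^ (l - j) * b j))"
      by (simp add: sum_distrib_left mult_ac)
    finally show "of_nat (n choose j) * b j * (\<Sum>k\<le>n - j. of_nat ((n - j) choose k) * (-1) ^ k * F (k + j))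
        = (\<Sum>l\<le>n. of_nat (n choose l) * F l * (of_nat (l choose j) * (-1) ^ (l - j) * b j))" .
  qed
  also have "\<dots> = (\<Sum>l\<le>n. of_nat (n choose l) * F l * (\<Sum>j\<le>n. of_nat (l choose j) * (-1) ^ (l - j) * b j))"
    by (subst sum.swap) (simp add: sum_distrib_left)
  also have "\<dots> = (\<Sum>l\<le>n. of_nat (n choose l) * F l * (\<Sum>j\<le>l. of_nat (l choose j) * (-1) ^ (l - j) * b j))"
    by (intro sum.cong refl arg_cong2[where f = "(*)"] sum.mono_neutral_right)
      (auto simp: not_le binomial_eq_0)
  also have "\<dots> = (\<Sum>l\<le>n. of_nat (n choose l) * a l * F l)"
    unfolding b_def binomial_inversion by (simp only: mult_ac)
  finally show ?thesis
    by (simp only: b_def)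
qed

lemma binomz_of_nat [simp]: "binomz N (int k) = int (N choose k)"
  by (simp add: binomz_def)

lemma sum_int_atLeast0AtMost:
  "(\<Sum>k\<in>{0..int N}. g k) = (\<Sum>k\<le>N. g (int k))"
proof -
  have "{0..int N} = int ` {..N}"
    by (simp add: image_int_atLeastAtMost atLeast0AtMost[symmetric])
  then show ?thesis
    by (simp add: sum.reindex)
qed

lemma sum_residue_classes:
  fixes m s :: int and A :: "int set"
  assumes "m > 0" and "finite A"
  shows "(\<Sum>i=0..m-1. \<Sum>k\<in>{k\<in>A. k mod m = (s + i) mod m}. g k ((k - (s + i)) div m))
       = (\<Sum>k\<in>A. g k ((k - s) div m))"
proof -
  have "(\<Sum>i=0..m-1. \<Sum>k\<in>{k\<in>A. k mod m = (s + i) mod m}. g k ((k - (s + i)) div m))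
      = (\<Sum>k\<in>A. \<Sum>i=0..m-1. if i = (k - s) mod m then g k ((k - (s + i)) div m) else 0)"
  proof -
    have residue_iff: "k mod m = (s + i) mod m \<longleftrightarrow> i = (k - s) mod m" if "i \<in> {0..m-1}" for k i
    proof -
      have "k mod m = (s + i) mod m \<longleftrightarrow> (k - s) mod m = i mod m"
        by (simp add: mod_eq_dvd_iff algebra_simps)
      with that show ?thesis by auto
    qed
    show ?thesis
      by (subst sum.swap, simp only: sum.inter_filter[OF \<open>finite A\<close>])
        (intro sum.cong refl; simp add: residue_iff)
  qed
  also have "\<dots> = (\<Sum>k\<in>A. g k ((k - (s + (k - s) mod m)) div m))"
    using \<open>m > 0\<close> by (simp add: sum.delta')
  also have "\<dots> = (\<Sum>k\<in>A. g k ((k - s) div m))"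
  proof -
    have "k - (s + (k - s) mod m) = m * ((k - s) div m)" for k
      using minus_mod_eq_mult_div[of "k - s" m] by (simp add: algebra_simps)
    with \<open>m > 0\<close> show ?thesis by simp
  qed
  finally show ?thesis .
qed

theorem lemma2p3:
  fixes d m :: int and n :: nat and r :: int and f :: "int \<Rightarrow> complex"
  assumes "d > 0" and "m > 0"
  shows "(\<Sum>k\<in>{k\<in>{0..int n}. k mod d = r mod d}.
            of_int (binomz n k) * (-1) ^ nat k * f \<lfloor>real_of_int (k - r) / real_of_int m\<rfloor>)
       = (\<Sum>j=0..n. of_nat (n choose j) *
            (\<Sum>i\<in>{i\<in>{0..int j}. i mod d = r mod d}. of_int (binomz j i) * (-1) ^ nat i) *
            (\<Sum>i=0..m-1.
               (\<Sum>k\<in>{k\<in>{0..int (n - j)}. k mod m = (r + i - int j) mod m}.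
                  of_int (binomz (n - j) k) * (-1) ^ nat k * f ((k - (r + i - int j)) div m))))"
proof -
  define a :: "nat \<Rightarrow> complex" where "a i = (if int i mod d = r mod d then (-1) ^ i else 0)" for i
  define F where "F l = f ((int l - r) div m)" for l :: nat
  have lhs: "(\<Sum>k\<in>{k\<in>{0..int n}. k mod d = r mod d}.
            of_int (binomz n k) * (-1) ^ nat k * f \<lfloor>real_of_int (k - r) / real_of_int m\<rfloor>)
      = (\<Sum>l\<le>n. of_nat (n choose l) * a l * F l)"
    unfolding sum.inter_filter[OF finite_atLeastAtMost] sum_int_atLeast0AtMost floor_divide_of_int_eq
    by (intro sum.cong refl) (simp add: a_def F_def)
  have inner: "(\<Sum>i\<in>{i\<in>{0..int j}. i mod d = r mod d}. of_int (binomz j i) * (-1) ^ nat i)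
      = (\<Sum>i\<le>j. of_nat (j choose i) * a i)" for j
    unfolding sum.inter_filter[OF finite_atLeastAtMost] sum_int_atLeast0AtMost
    by (intro sum.cong refl) (simp add: a_def)
  have sigma: "(\<Sum>i=0..m-1.
               (\<Sum>k\<in>{k\<in>{0..int (n - j)}. k mod m = (r + i - int j) mod m}.
                  of_int (binomz (n - j) k) * (-1) ^ nat k * f ((k - (r + i - int j)) div m)))
      = (\<Sum>k\<le>n - j. of_nat ((n - j) choose k) * (-1) ^ k * F (k + j))" for j
    using sum_residue_classes[OF \<open>m > 0\<close>, where A = "{0..int (n - j)}" and s = "r - int j"
        and g = "\<lambda>k q. of_int (binomz (n - j) k) * (-1) ^ nat k * f q"]
    by (simp add: sum_int_atLeast0AtMost F_def algebra_simps)
  show ?thesis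
    unfolding lhs inner sigma atLeast0AtMost
    by (rule binomial_transform_adjoint[symmetric])
qed

end
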